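(* Let $V$ be a finite nonempty set and $f:\{0,1\}^V\to\{0,1\}^V$ an and-net. If for every $1\le k\le |V|$ there are at most $2^k-1$ points $x\in\{0,1\}^V$ such that $Gf(x)$ has a chordless positive cycle of length $k$, then $f$ has at most one fixed point.
   Context: For $x^{j\alpha}$ the point equal to $x$ except its $j$-component is $\alpha$, the local interaction graph $Gf(x)$ is the signed digraph on $V$ with a positive arc from $j$ to $i$ if $f_i(x^{j1})-f_i(x^{j0})=1$ and a negative arc if it equals $-1$; the global interaction graph $G(f)$ has a positive (resp. negative) arc from $j$ to $i$ iff such an arc exists in $Gf(x)$ for at least one $x$. $f$ is an and-net if $G(f)$ has at most one arc from $j$ to $i$ for all $i,j$ and for every $i$ and $x$: $f_i(x)=1$ iff $G(f)$ has no positive arc $j\to i$ with $x_j=0$ and no negative arc $j\to i$ with $x_j=1$. A cycle of a signed digraph $G$ is a subgraph whose underlying unsigned digraph is a directed cycle (length = number of arcs); positive if it has an even number of negative arcs; chordless if its underlying unsigned digraph is an induced subgraph of the underlying unsigned digraph of $G$. *)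

theory Defs
  imports Main
begin

text \<open>Points of {0,1}^V are functions V \<Rightarrow> bool (True = 1).
  A signed digraph on V is a set of arcs (j, s, i): an arc from j to i with
  sign s (True = positive, False = negative).\<close>

type_synonym 'v sdigraph = "('v \<times> bool \<times> 'v) set"

definition local_graph :: "(('v \<Rightarrow> bool) \<Rightarrow> ('v \<Rightarrow> bool)) \<Rightarrow> ('v \<Rightarrow> bool) \<Rightarrow> 'v sdigraph" where
  "local_graph f x =
     {(j, True, i) | j i. f (x(j := True)) i \<and> \<not> f (x(j := False)) i} \<union>
     {(j, False, i) | j i. \<not> f (x(j := True)) i \<and> f (x(j := False)) i}"

definition global_graph :: "(('v \<Rightarrow> bool) \<Rightarrow> ('v \<Rightarrow> bool)) \<Rightarrow> 'v sdigraph" where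
  "global_graph f = (\<Union>x. local_graph f x)"

definition and_net :: "(('v \<Rightarrow> bool) \<Rightarrow> ('v \<Rightarrow> bool)) \<Rightarrow> bool" where
  "and_net f \<longleftrightarrow>
     (\<forall>j i. \<not> ((j, True, i) \<in> global_graph f \<and> (j, False, i) \<in> global_graph f)) \<and>
     (\<forall>i x. f x i \<longleftrightarrow>
        (\<forall>j. ((j, True, i) \<in> global_graph f \<longrightarrow> x j) \<and>
             ((j, False, i) \<in> global_graph f \<longrightarrow> \<not> x j)))"

text \<open>Chordless: every arc of G (of any sign) between cycle vertices is a cycle arc
  (underlying unsigned digraph of the cycle is induced).\<close>

definition has_chordless_pos_cycle :: "'v sdigraph \<Rightarrow> nat \<Rightarrow> bool" where
  "has_chordless_pos_cycle G k \<longleftrightarrow>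
     (\<exists>vs ss. length vs = k \<and> length ss = k \<and> k \<ge> 1 \<and> distinct vs \<and>
        (\<forall>t<k. (vs ! t, ss ! t, vs ! ((t + 1) mod k)) \<in> G) \<and>
        even (length (filter Not ss)) \<and>
        (\<forall>u\<in>set vs. \<forall>w\<in>set vs. (\<exists>s. (u, s, w) \<in> G) \<longrightarrow>
            (\<exists>t<k. u = vs ! t \<and> w = vs ! ((t + 1) mod k))))"

end

theory Submission
  imports Defs "HOL-Combinatorics.Permutations"
begin

text \<open>Let \<open>x \<noteq> y\<close> be fixed points and \<open>D\<close> the set of vertices where they differ. In an
  and-net, the fixed point that is true at \<open>i \<in> D\<close> satisfies every input of \<open>i\<close>, and the other
  one violates some input, which must come from \<open>D\<close>. So every vertex of \<open>D\<close> has an in-neighbour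
  in \<open>D\<close>, and an arc \<open>a \<rightarrow> b\<close> inside \<open>D\<close> is positive iff \<open>x a = x b\<close>.
  A purely combinatorial induction on such digraphs yields a minimal in-closed \<open>C \<subseteq> D\<close> (an
  induced cycle, positive because \<open>x\<close> changes value an even number of times around it) such that
  every other vertex of \<open>D\<close> sees only equally labelled vertices of \<open>C\<close>. Letting each vertex outside
  \<open>C\<close> copy the fixed point that is true at its out-neighbours in \<open>C\<close>, and choosing the values on
  \<open>C\<close> freely, gives \<open>2^|C|\<close> points whose local graph contains that cycle.\<close>

definition in_closed :: "('v \<Rightarrow> 'v \<Rightarrow> bool) \<Rightarrow> 'v set \<Rightarrow> bool" where
  "in_closed E X \<longleftrightarrow> (\<forall>x\<in>X. \<exists>w\<in>X. E w x)"

definition out_closed :: "('v \<Rightarrow> 'v \<Rightarrow> bool) \<Rightarrow> 'v set \<Rightarrow> bool" where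
  "out_closed E X \<longleftrightarrow> (\<forall>x\<in>X. \<exists>w\<in>X. E x w)"

definition minimal_in_closed :: "('v \<Rightarrow> 'v \<Rightarrow> bool) \<Rightarrow> 'v set \<Rightarrow> bool" where
  "minimal_in_closed E C \<longleftrightarrow>
     C \<noteq> {} \<and> in_closed E C \<and> (\<forall>X\<subseteq>C. X \<noteq> {} \<longrightarrow> in_closed E X \<longrightarrow> X = C)"

definition induced_cycle :: "('v \<Rightarrow> 'v \<Rightarrow> bool) \<Rightarrow> 'v list \<Rightarrow> bool" where
  "induced_cycle E vs \<longleftrightarrow> vs \<noteq> [] \<and> distinct vs \<and>
     (\<forall>t<length vs. E (vs ! t) (vs ! ((t + 1) mod length vs))) \<and>
     (\<forall>u\<in>set vs. \<forall>w\<in>set vs. E u w \<longrightarrow>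
        (\<exists>t<length vs. u = vs ! t \<and> w = vs ! ((t + 1) mod length vs)))"

lemma ex_minimal_subset:
  assumes "finite Y" "P Y"
  shows "\<exists>Z\<subseteq>Y. P Z \<and> (\<forall>Z'\<subseteq>Z. P Z' \<longrightarrow> Z' = Z)"
proof -
  have "finite {Z. Z \<subseteq> Y \<and> P Z}"
    using assms(1) by simp
  from finite_has_minimal2[OF this, of Y] assms(2) obtain Z
    where "Z \<subseteq> Y" "P Z" and min: "\<And>Z'. Z' \<subseteq> Y \<Longrightarrow> P Z' \<Longrightarrow> Z' \<subseteq> Z \<Longrightarrow> Z = Z'"
    by auto
  moreover have "\<forall>Z'\<subseteq>Z. P Z' \<longrightarrow> Z' = Z"
    using min \<open>Z \<subseteq> Y\<close> by blast
  ultimately show ?thesis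
    by blast
qed

lemma ex_minimal_in_closed_subset:
  assumes "finite X" "X \<noteq> {}" "in_closed E X"
  shows "\<exists>C\<subseteq>X. minimal_in_closed E C"
proof -
  have "\<exists>C\<subseteq>X. (C \<noteq> {} \<and> in_closed E C) \<and> (\<forall>Z\<subseteq>C. Z \<noteq> {} \<and> in_closed E Z \<longrightarrow> Z = C)"
    by (rule ex_minimal_subset) (use assms in simp_all)
  then show ?thesis
    unfolding minimal_in_closed_def by blast
qed

lemma out_closed_contains_in_closed:
  assumes "finite Y" "Y \<noteq> {}" "out_closed E Y"
  shows "\<exists>Z\<subseteq>Y. Z \<noteq> {} \<and> in_closed E Z"
proof -
  have "\<exists>Z\<subseteq>Y. (Z \<noteq> {} \<and> out_closed E Z) \<and> (\<forall>Z'\<subseteq>Z. Z' \<noteq> {} \<and> out_closed E Z' \<longrightarrow> Z' = Z)"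
    by (rule ex_minimal_subset) (use assms in simp_all)
  then obtain Z where Z: "Z \<subseteq> Y" "Z \<noteq> {} \<and> out_closed E Z"
    and min: "\<forall>Z'\<subseteq>Z. Z' \<noteq> {} \<and> out_closed E Z' \<longrightarrow> Z' = Z"
    by blast
  have "in_closed E Z"
    unfolding in_closed_def
  proof (rule ccontr)
    assume "\<not> (\<forall>x\<in>Z. \<exists>w\<in>Z. E w x)"
    then obtain c where c: "c \<in> Z" "\<And>w. w \<in> Z \<Longrightarrow> \<not> E w c"
      by blast
    \<comment> \<open>no vertex of \<open>Z\<close> points to \<open>c\<close>, so removing \<open>c\<close> keeps \<open>Z\<close> out-closed\<close>
    have "out_closed E (Z - {c})"
      unfolding out_closed_def
    proof
      fix d
      assume "d \<in> Z - {c}"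
      then obtain w where "w \<in> Z" "E d w"
        using Z(2) unfolding out_closed_def by blast
      then show "\<exists>w\<in>Z - {c}. E d w"
        using c(2) \<open>d \<in> Z - {c}\<close> by blast
    qed
    moreover have "Z - {c} \<noteq> {}"
    proof -
      obtain w where "w \<in> Z" "E c w"
        using Z(2) c(1) unfolding out_closed_def by blast
      then show ?thesis
        using c by blast
    qed
    ultimately have "Z - {c} = Z"
      using min by (meson Diff_subset)
    then show False
      using c(1) by auto
  qed
  then show ?thesis
    using Z by blast
qed

lemma minimal_in_closed_in_choice_surj:
  assumes C: "minimal_in_closed E C"
    and q: "\<And>d. d \<in> C \<Longrightarrow> q d \<in> C \<and> E (q d) d"
  shows "q ` C = C"
proof
  show "q ` C \<subseteq> C"
    using q by auto
  show "C \<subseteq> q ` C"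
  proof
    fix d
    assume d: "d \<in> C"
    have iter: "(q ^^ n) c \<in> C" if "c \<in> C" for c n
      using that q by (induction n) auto
    let ?O = "range (\<lambda>n. (q ^^ n) (q d))"
    have "?O \<subseteq> C"
      using iter q d by auto
    moreover have "in_closed E ?O"
      unfolding in_closed_def
    proof
      fix w
      assume "w \<in> ?O"
      then obtain n where w: "w = (q ^^ n) (q d)"
        by auto
      have "E ((q ^^ Suc n) (q d)) w"
        using q iter[of "q d" n] d w by simp
      then show "\<exists>v\<in>?O. E v w"
        by blast
    qed
    ultimately have "?O = C"
      using C unfolding minimal_in_closed_def by blast
    then obtain n where "d = (q ^^ n) (q d)"
      using d by (metis rangeE)
    also have "\<dots> = q ((q ^^ n) d)"
      by (simp add: funpow_swap1)
    finally show "d \<in> q ` C"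
      using iter d by blast
  qed
qed

lemma minimal_in_closed_ex_in_choice:
  assumes "minimal_in_closed E C"
  obtains q where "\<And>d. d \<in> C \<Longrightarrow> q d \<in> C \<and> E (q d) d"
  using assms bchoice[of C "\<lambda>d w. w \<in> C \<and> E w d"]
  unfolding minimal_in_closed_def in_closed_def by blast

lemma minimal_in_closed_unique_in_neighbour:
  assumes fin: "finite C" and C: "minimal_in_closed E C"
    and "c \<in> C" "w1 \<in> C" "w2 \<in> C" "E w1 c" "E w2 c"
  shows "w1 = w2"
proof (rule ccontr)
  assume ne: "w1 \<noteq> w2"
  obtain q where q: "\<And>d. d \<in> C \<Longrightarrow> q d \<in> C \<and> E (q d) d"
    using minimal_in_closed_ex_in_choice[OF C] by blast
  \<comment> \<open>two in-neighbour choices that differ only at \<open>c\<close> are both bijections of \<open>C\<close>\<close>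
  define q1 where "q1 = q(c := w1)"
  define q2 where "q2 = q(c := w2)"
  have "q1 ` C = C"
    by (rule minimal_in_closed_in_choice_surj[OF C]) (simp add: q1_def q assms(4,6))
  have "q2 ` C = C"
    by (rule minimal_in_closed_in_choice_surj[OF C]) (simp add: q2_def q assms(5,7))
  have "inj_on q1 C"
    using \<open>q1 ` C = C\<close> fin by (simp add: eq_card_imp_inj_on)
  obtain d where d: "d \<in> C" "q2 d = w1"
    using \<open>q2 ` C = C\<close> \<open>w1 \<in> C\<close> by (metis imageE)
  then have "d \<noteq> c" "q1 d = q1 c"
    using ne unfolding q1_def q2_def by auto
  then show False
    using \<open>inj_on q1 C\<close> d(1) \<open>c \<in> C\<close> by (meson inj_onD)
qed

lemma minimal_in_closed_ex_out_neighbour: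
  assumes "minimal_in_closed E C" "d \<in> C"
  shows "\<exists>e\<in>C. E d e"
proof -
  obtain q where q: "\<And>d. d \<in> C \<Longrightarrow> q d \<in> C \<and> E (q d) d"
    using minimal_in_closed_ex_in_choice[OF assms(1)] by blast
  then have "d \<in> q ` C"
    using minimal_in_closed_in_choice_surj[OF assms(1)] assms(2) by blast
  then show ?thesis
    using q by blast
qed

lemma minimal_in_closed_unique_out_neighbour:
  assumes fin: "finite C" and C: "minimal_in_closed E C"
    and "u \<in> C" "a \<in> C" "b \<in> C" "E u a" "E u b"
  shows "a = b"
proof -
  obtain q where q: "\<And>d. d \<in> C \<Longrightarrow> q d \<in> C \<and> E (q d) d"
    using minimal_in_closed_ex_in_choice[OF C] by blast
  have "inj_on q C"
    using minimal_in_closed_in_choice_surj[OF C q] fin by (simp add: eq_card_imp_inj_on)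
  moreover have "q a = u" "q b = u"
    using minimal_in_closed_unique_in_neighbour[OF fin C] q assms(3-) by blast+
  ultimately show ?thesis
    using assms(4,5) by (metis inj_onD)
qed

lemma permutation_cycle_list:
  assumes "permutation p"
  obtains vs where "vs \<noteq> []" "distinct vs" "set vs \<subseteq> range (\<lambda>i. (p ^^ i) c)"
    "p ` set vs = set vs" "\<And>t. t < length vs \<Longrightarrow> vs ! ((t + 1) mod length vs) = p (vs ! t)"
proof -
  obtain n where "0 < n \<and> (p ^^ n) c = c"
    using permutation_self[OF assms] by blast
  define k where "k = (LEAST n. 0 < n \<and> (p ^^ n) c = c)"
  have k: "0 < k" "(p ^^ k) c = c"
    using LeastI[of "\<lambda>n. 0 < n \<and> (p ^^ n) c = c", OF \<open>0 < n \<and> _\<close>] unfolding k_def by auto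
  have k_least: "(p ^^ m) c \<noteq> c" if "0 < m" "m < k" for m
    using not_less_Least[of m "\<lambda>n. 0 < n \<and> (p ^^ n) c = c"] that unfolding k_def by blast
  define vs where "vs = map (\<lambda>i. (p ^^ i) c) [0..<k]"
  have len: "length vs = k"
    unfolding vs_def by simp
  have nth_vs: "vs ! t = (p ^^ t) c" if "t < k" for t
    using that unfolding vs_def by simp
  have next_vs: "vs ! ((t + 1) mod k) = p (vs ! t)" if "t < k" for t
    using that nth_vs[of t] nth_vs[of "(t + 1) mod k"] k(1) funpow_mod_eq[OF k(2), of "t + 1"]
    by simp
  have "p ` set vs \<subseteq> set vs"
  proof
    fix w
    assume "w \<in> p ` set vs"
    then obtain t where "t < k" "w = p (vs ! t)"
      using len by (auto simp: in_set_conv_nth)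
    then show "w \<in> set vs"
      using next_vs[of t] len k(1) by (metis mod_less_divisor nth_mem)
  qed
  moreover have "inj_on p (set vs)"
    using permutation_bijective[OF assms] by (meson bij_is_inj inj_on_subset subset_UNIV)
  ultimately have "p ` set vs = set vs"
    by (simp add: endo_inj_surj)
  moreover have "distinct vs"
    unfolding vs_def using inj_on_funpow_least[OF k(2) k_least] by (simp add: distinct_map)
  moreover have "vs \<noteq> []" "set vs \<subseteq> range (\<lambda>i. (p ^^ i) c)"
    using k(1) unfolding vs_def by auto
  ultimately show thesis
    using that next_vs len by blast
qed

lemma minimal_in_closed_successor_permutation:
  assumes fin: "finite C" and C: "minimal_in_closed E C"
  obtains p where "permutation p" "\<And>d. d \<in> C \<Longrightarrow> p d \<in> C" "\<And>d. d \<in> C \<Longrightarrow> E d (p d)"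
proof -
  obtain s where s: "\<And>d. d \<in> C \<Longrightarrow> s d \<in> C \<and> E d (s d)"
    using minimal_in_closed_ex_out_neighbour[OF C] by metis
  define p where "p d = (if d \<in> C then s d else d)" for d
  have p: "p d \<in> C" "E d (p d)" if "d \<in> C" for d
    using s that unfolding p_def by auto
  have "inj_on p C"
  proof (rule inj_onI)
    fix a b
    assume ab: "a \<in> C" "b \<in> C" "p a = p b"
    have "E b (p a)"
      using p(2)[OF ab(2)] ab(3) by simp
    with ab show "a = b"
      using minimal_in_closed_unique_in_neighbour[OF fin C p(1) _ _ p(2)] by blast
  qed
  moreover have "p ` C \<subseteq> C"
    using p(1) by blast
  ultimately have "bij_betw p C C"
    using fin by (simp add: bij_betw_def endo_inj_surj)
  then have "p permutes C"
    by (rule bij_imp_permutes) (simp add: p_def)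
  with fin have "permutation p"
    by (rule permutes_imp_permutation)
  with p show thesis
    using that by blast
qed

lemma minimal_in_closed_induced_cycle:
  assumes fin: "finite C" and C: "minimal_in_closed E C"
  obtains vs where "set vs = C" "induced_cycle E vs"
proof -
  obtain p where p: "permutation p" "\<And>d. d \<in> C \<Longrightarrow> p d \<in> C" "\<And>d. d \<in> C \<Longrightarrow> E d (p d)"
    using minimal_in_closed_successor_permutation[OF fin C] by blast
  obtain c where c: "c \<in> C"
    using C unfolding minimal_in_closed_def by blast
  obtain vs where vs: "vs \<noteq> []" "distinct vs" "set vs \<subseteq> range (\<lambda>i. (p ^^ i) c)"
    "p ` set vs = set vs" "\<And>t. t < length vs \<Longrightarrow> vs ! ((t + 1) mod length vs) = p (vs ! t)"
    using permutation_cycle_list[OF p(1)] by blast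
  have "(p ^^ i) c \<in> C" for i
    using c p(2) by (induction i) auto
  then have "set vs \<subseteq> C"
    using vs(3) by blast
  moreover have "in_closed E (set vs)"
    unfolding in_closed_def
  proof
    fix w
    assume "w \<in> set vs"
    then obtain v where "v \<in> set vs" "w = p v"
      using vs(4) by blast
    then show "\<exists>v\<in>set vs. E v w"
      using p(3) \<open>set vs \<subseteq> C\<close> by blast
  qed
  ultimately have "set vs = C"
    using C vs(1) unfolding minimal_in_closed_def by blast
  moreover have "induced_cycle E vs"
    unfolding induced_cycle_def
  proof (intro conjI ballI allI impI)
    show "vs \<noteq> []" "distinct vs"
      by (fact vs(1,2))+
    show "E (vs ! t) (vs ! ((t + 1) mod length vs))" if "t < length vs" for t
      using that vs(5) p(3) \<open>set vs = C\<close> by (metis nth_mem)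
    show "\<exists>t<length vs. u = vs ! t \<and> w = vs ! ((t + 1) mod length vs)"
      if "u \<in> set vs" "w \<in> set vs" "E u w" for u w
    proof -
      obtain t where t: "t < length vs" "u = vs ! t"
        using \<open>u \<in> set vs\<close> by (metis in_set_conv_nth)
      have "w = p u"
        using minimal_in_closed_unique_out_neighbour[OF fin C] p(2,3) that \<open>set vs = C\<close> by blast
      then show ?thesis
        using t vs(5) by auto
    qed
  qed
  ultimately show thesis
    using that by blast
qed

definition uniform_attachment ::
  "('v \<Rightarrow> 'v \<Rightarrow> bool) \<Rightarrow> ('v \<Rightarrow> bool) \<Rightarrow> 'v set \<Rightarrow> 'v set \<Rightarrow> bool" where
  "uniform_attachment E L S C \<longleftrightarrow> (\<forall>r\<in>S - C. \<forall>a\<in>C. \<forall>b\<in>C. E r a \<longrightarrow> E r b \<longrightarrow> L a = L b)"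

definition bypass :: "('v \<Rightarrow> 'v \<Rightarrow> bool) \<Rightarrow> 'v \<Rightarrow> 'v \<Rightarrow> 'v \<Rightarrow> 'v \<Rightarrow> bool" where
  "bypass E u y a b \<longleftrightarrow> E a b \<or> (a = u \<and> E y b)"

lemma in_closed_mono:
  assumes "in_closed E X" "\<And>a b. E a b \<Longrightarrow> E' a b"
  shows "in_closed E' X"
  using assms unfolding in_closed_def by blast

lemma in_closed_bypass:
  assumes "in_closed E S" "y \<in> S \<Longrightarrow> u \<in> S" "u \<noteq> y"
  shows "in_closed (bypass E u y) (S - {y})"
  unfolding in_closed_def
proof
  fix s
  assume s: "s \<in> S - {y}"
  then obtain t where "t \<in> S" "E t s"
    using assms(1) unfolding in_closed_def by blast
  then show "\<exists>w\<in>S - {y}. bypass E u y w s"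
    using assms(2,3) unfolding bypass_def by (cases "t = y") auto
qed

lemma minimal_in_closed_ex_in_neighbour:
  assumes "minimal_in_closed E C" "d \<in> C"
  shows "\<exists>w\<in>C. E w d"
  using assms unfolding minimal_in_closed_def in_closed_def by blast

context
  fixes E :: "'v \<Rightarrow> 'v \<Rightarrow> bool" and L :: "'v \<Rightarrow> bool" and S :: "'v set" and u y :: 'v
    and C :: "'v set"
  assumes only_in_neighbour: "\<And>w. w \<in> S \<Longrightarrow> E w y \<Longrightarrow> w = u"
    and y: "y \<in> S" "u \<in> S" "E u y" "u \<noteq> y"
    and C: "finite C" "C \<subseteq> S - {y}" "minimal_in_closed (bypass E u y) C"
    and C_uniform: "uniform_attachment (bypass E u y) L (S - {y}) C"
begin

lemma minimal_in_closed_bypass_lift: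
  assumes "in_closed E C"
  shows "minimal_in_closed E C \<and> uniform_attachment E L S C"
proof
  have "X = C" if "X \<subseteq> C" "X \<noteq> {}" "in_closed E X" for X
  proof -
    have "in_closed (bypass E u y) X"
      by (rule in_closed_mono[OF that(3)]) (simp add: bypass_def)
    then show ?thesis
      using C(3) that(1,2) unfolding minimal_in_closed_def by blast
  qed
  then show "minimal_in_closed E C"
    using C(3) assms unfolding minimal_in_closed_def by blast
  show "uniform_attachment E L S C"
    unfolding uniform_attachment_def
  proof (intro ballI impI)
    fix r a b
    assume r: "r \<in> S - C" and ab: "a \<in> C" "b \<in> C" "E r a" "E r b"
    show "L a = L b"
    proof (cases "r = y")
      case True
      then have "bypass E u y u a" "bypass E u y u b"
        using ab unfolding bypass_def by auto
      show ?thesis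
      proof (cases "u \<in> C")
        case True
        then show ?thesis
          using minimal_in_closed_unique_out_neighbour[OF C(1,3) True ab(1,2)]
            \<open>bypass E u y u a\<close> \<open>bypass E u y u b\<close> by simp
      next
        case False
        then have "u \<in> (S - {y}) - C"
          using y(2,4) False by auto
        then show ?thesis
          using C_uniform ab(1,2) \<open>bypass E u y u a\<close> \<open>bypass E u y u b\<close>
          unfolding uniform_attachment_def by blast
      qed
    next
      case False
      then show ?thesis
        using C_uniform r ab unfolding uniform_attachment_def bypass_def by blast
    qed
  qed
qed

lemma in_closed_subset_insert_eq:
  assumes c: "c \<in> C" "\<And>w. w \<in> C \<Longrightarrow> \<not> E w c"
    and X: "X \<subseteq> insert y C" "X \<noteq> {}" "in_closed E X"
  shows "X = insert y C"
proof -
  have in_X_y: "w = u" if "w \<in> X" "E w y" for w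
    using only_in_neighbour that X(1) y(1) C(2) by blast
  have "u \<in> X" if "y \<in> X"
    using X(3) that in_X_y unfolding in_closed_def by blast
  then have "in_closed (bypass E u y) (X - {y})"
    using in_closed_bypass[OF X(3) _ y(4)] by blast
  moreover have "X - {y} \<noteq> {}"
  proof
    assume "X - {y} = {}"
    then have "X = {y}"
      using X(2) by auto
    then have "E y y"
      using X(3) unfolding in_closed_def by auto
    then show False
      using in_X_y[of y] \<open>X = {y}\<close> y(4) by simp
  qed
  moreover have "X - {y} \<subseteq> C"
    using X(1) by blast
  ultimately have "X - {y} = C"
    using C(3) unfolding minimal_in_closed_def by blast
  then have "c \<in> X"
    using c(1) by blast
  then obtain e where "e \<in> X" "E e c"
    using X(3) unfolding in_closed_def by blast
  then have "y \<in> X"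
    using c(2) \<open>X - {y} = C\<close> by (cases "e = y") auto
  with \<open>X - {y} = C\<close> show ?thesis
    by auto
qed

lemma minimal_in_closed_bypass_lift_insert:
  assumes "\<not> in_closed E C"
  shows "minimal_in_closed E (insert y C) \<and> uniform_attachment E L S (insert y C)"
proof -
  \<comment> \<open>some vertex of \<open>C\<close> is entered only by a redirected arc \<open>u \<rightarrow> c\<close>, i.e. \<open>y \<rightarrow> c\<close> in \<open>E\<close>\<close>
  obtain c where c: "c \<in> C" "\<And>w. w \<in> C \<Longrightarrow> \<not> E w c"
    using assms unfolding in_closed_def by blast
  obtain w where "w \<in> C" "bypass E u y w c"
    using minimal_in_closed_ex_in_neighbour[OF C(3) c(1)] by blast
  then have u: "u \<in> C" and "E y c"
    using c(2) unfolding bypass_def by auto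
  have closed: "in_closed E (insert y C)"
    unfolding in_closed_def
  proof
    fix d
    assume "d \<in> insert y C"
    moreover have "\<exists>w\<in>insert y C. E w d" if d: "d \<in> C"
    proof -
      obtain w where "w \<in> C" "bypass E u y w d"
        using minimal_in_closed_ex_in_neighbour[OF C(3) d] by blast
      then show ?thesis
        unfolding bypass_def by blast
    qed
    ultimately show "\<exists>w\<in>insert y C. E w d"
      using u y(3) by auto
  qed
  have "uniform_attachment E L S (insert y C)"
    unfolding uniform_attachment_def
  proof (intro ballI impI)
    fix r a b
    assume r: "r \<in> S - insert y C" and ab: "a \<in> insert y C" "b \<in> insert y C" "E r a" "E r b"
    have "r \<noteq> u"
      using r u by blast
    then have "a \<noteq> y" "b \<noteq> y"
      using only_in_neighbour[of r] r ab(3,4) by blast+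
    then have "a \<in> C" "b \<in> C" "r \<in> (S - {y}) - C"
      using r ab(1,2) by blast+
    then show "L a = L b"
      using C_uniform ab(3,4) unfolding uniform_attachment_def bypass_def by blast
  qed
  with closed in_closed_subset_insert_eq[OF c] show ?thesis
    unfolding minimal_in_closed_def by blast
qed

end

lemma ex_minimal_in_closed_uniform_attachment_bypass:
  fixes E :: "'v \<Rightarrow> 'v \<Rightarrow> bool" and L :: "'v \<Rightarrow> bool"
  assumes y: "y \<in> S" "u \<in> S" "E u y" "u \<noteq> y"
    and only_in_neighbour: "\<And>w. w \<in> S \<Longrightarrow> E w y \<Longrightarrow> w = u" and "finite S"
    and "\<exists>C\<subseteq>S - {y}. minimal_in_closed (bypass E u y) C \<and>
           uniform_attachment (bypass E u y) L (S - {y}) C"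
  shows "\<exists>C\<subseteq>S. minimal_in_closed E C \<and> uniform_attachment E L S C"
proof -
  obtain C where C: "C \<subseteq> S - {y}" "minimal_in_closed (bypass E u y) C"
    "uniform_attachment (bypass E u y) L (S - {y}) C"
    using assms(7) by blast
  have "finite C"
    using C(1) \<open>finite S\<close> finite_subset by blast
  show ?thesis
  proof (cases "in_closed E C")
    case True
    then show ?thesis
      using minimal_in_closed_bypass_lift[OF only_in_neighbour y \<open>finite C\<close> C] C(1) by blast
  next
    case False
    then show ?thesis
      using minimal_in_closed_bypass_lift_insert[OF only_in_neighbour y \<open>finite C\<close> C] C(1) y(1)
      by blast
  qed
qed

lemma ex_vertex_uniform_out_neighbours:
  fixes L :: "'v \<Rightarrow> bool"
  assumes "finite S" "S \<noteq> {}"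
    and no_mono: "\<nexists>X. X \<subseteq> S \<and> X \<noteq> {} \<and> in_closed E X \<and> (\<forall>a\<in>X. \<forall>b\<in>X. L a = L b)"
  shows "\<exists>v\<in>S. \<forall>a\<in>S. \<forall>b\<in>S. E v a \<longrightarrow> E v b \<longrightarrow> L a = L b"
proof (rule ccontr)
  assume none: "\<not> ?thesis"
  have true_out: "\<exists>a\<in>S. E v a \<and> L a" if "v \<in> S" for v
  proof -
    have "\<not> (\<forall>a\<in>S. \<forall>b\<in>S. E v a \<longrightarrow> E v b \<longrightarrow> L a = L b)"
      using none that by blast
    then obtain a b where "a \<in> S" "b \<in> S" "E v a" "E v b" "L a \<noteq> L b"
      by blast
    then show ?thesis
      by (cases "L a") auto
  qed
  define Y where "Y = {s\<in>S. L s}"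
  have "out_closed E Y"
    using true_out unfolding out_closed_def Y_def by auto
  moreover have "Y \<noteq> {}"
    using true_out assms(2) unfolding Y_def by auto
  moreover have "finite Y"
    using assms(1) unfolding Y_def by simp
  ultimately obtain X where X: "X \<subseteq> Y" "X \<noteq> {}" "in_closed E X"
    using out_closed_contains_in_closed by blast
  moreover have "X \<subseteq> S" "\<forall>a\<in>X. \<forall>b\<in>X. L a = L b"
    using X(1) unfolding Y_def by auto
  ultimately show False
    using no_mono by blast
qed

lemma in_closed_remove_vertex:
  assumes "in_closed E S"
    and "\<nexists>y w. y \<in> S \<and> w \<in> S \<and> w \<noteq> y \<and> E w y \<and> (\<forall>w'\<in>S. E w' y \<longrightarrow> w' = w)"
  shows "in_closed E (S - {v})"
  unfolding in_closed_def
proof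
  fix s
  assume s: "s \<in> S - {v}"
  then obtain t where "t \<in> S" "E t s"
    using assms(1) unfolding in_closed_def by blast
  show "\<exists>t\<in>S - {v}. E t s"
  proof (cases "t = v")
    case True
    then have "\<not> (\<forall>w'\<in>S. E w' s \<longrightarrow> w' = v)"
      using assms(2) s \<open>t \<in> S\<close> \<open>E t s\<close> by blast
    then show ?thesis
      by blast
  next
    case False
    then show ?thesis
      using \<open>t \<in> S\<close> \<open>E t s\<close> by blast
  qed
qed

lemma uniform_attachment_insert_vertex:
  assumes "uniform_attachment E L (S - {v}) C" "C \<subseteq> S"
    and "\<forall>a\<in>S. \<forall>b\<in>S. E v a \<longrightarrow> E v b \<longrightarrow> L a = L b"
  shows "uniform_attachment E L S C"
  unfolding uniform_attachment_def
proof (intro ballI impI)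
  fix r a b
  assume r: "r \<in> S - C" and ab: "a \<in> C" "b \<in> C" "E r a" "E r b"
  show "L a = L b"
  proof (cases "r = v")
    case True
    then show ?thesis
      using assms(2,3) ab by blast
  next
    case False
    then have "r \<in> (S - {v}) - C"
      using r by blast
    then show ?thesis
      using assms(1) ab unfolding uniform_attachment_def by blast
  qed
qed

lemma ex_minimal_in_closed_uniform_attachment:
  fixes L :: "'v \<Rightarrow> bool"
  assumes "finite S" "S \<noteq> {}" "in_closed E S"
  shows "\<exists>C\<subseteq>S. minimal_in_closed E C \<and> uniform_attachment E L S C"
  using assms
proof (induction "card S" arbitrary: S E rule: less_induct)
  case less
  show ?case
  proof (cases "\<exists>X. X \<subseteq> S \<and> X \<noteq> {} \<and> in_closed E X \<and> (\<forall>a\<in>X. \<forall>b\<in>X. L a = L b)")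
    case True
    then obtain X where X: "X \<subseteq> S" "X \<noteq> {}" "in_closed E X" "\<forall>a\<in>X. \<forall>b\<in>X. L a = L b"
      by blast
    obtain C where "C \<subseteq> X" "minimal_in_closed E C"
      using ex_minimal_in_closed_subset[OF finite_subset[OF X(1) less.prems(1)] X(2,3)] by blast
    moreover have "uniform_attachment E L S C"
      using X(4) \<open>C \<subseteq> X\<close> unfolding uniform_attachment_def by blast
    ultimately show ?thesis
      using X(1) by blast
  next
    case no_mono: False
    show ?thesis
    proof (cases "\<exists>y w. y \<in> S \<and> w \<in> S \<and> w \<noteq> y \<and> E w y \<and> (\<forall>w'\<in>S. E w' y \<longrightarrow> w' = w)")
      case True
      \<comment> \<open>\<open>y\<close> has the single in-neighbour \<open>u\<close>: contract the arc \<open>u \<rightarrow> y\<close>\<close>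
      then obtain y u where y: "y \<in> S" "u \<in> S" "E u y" "u \<noteq> y"
        and only: "\<And>w. w \<in> S \<Longrightarrow> E w y \<Longrightarrow> w = u"
        by blast
      have "finite (S - {y})" "S - {y} \<noteq> {}"
        using less.prems(1) y(2,4) by auto
      moreover have "in_closed (bypass E u y) (S - {y})"
        using in_closed_bypass[OF less.prems(3) _ y(4)] y(2) by blast
      ultimately have IH: "\<exists>C\<subseteq>S - {y}. minimal_in_closed (bypass E u y) C \<and>
          uniform_attachment (bypass E u y) L (S - {y}) C"
        by (rule less.hyps[OF card_Diff1_less[OF less.prems(1) y(1)]])
      show ?thesis
        by (rule ex_minimal_in_closed_uniform_attachment_bypass[where E = E, OF y only less.prems(1) IH])
    next
      case False
      \<comment> \<open>delete a vertex whose out-neighbours all carry the same label\<close>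
      obtain v where v: "v \<in> S" "\<forall>a\<in>S. \<forall>b\<in>S. E v a \<longrightarrow> E v b \<longrightarrow> L a = L b"
        using ex_vertex_uniform_out_neighbours[OF less.prems(1,2) no_mono] by blast
      \<comment> \<open>\<open>S\<close> itself is not monochromatic, so it has a second vertex\<close>
      obtain a b where "a \<in> S" "b \<in> S" "L a \<noteq> L b"
        using no_mono less.prems(2,3) by blast
      then have "S - {v} \<noteq> {}"
        by blast
      then obtain C where C: "C \<subseteq> S - {v}" "minimal_in_closed E C" "uniform_attachment E L (S - {v}) C"
        using less.hyps[OF card_Diff1_less[OF less.prems(1) v(1)]]
          in_closed_remove_vertex[OF less.prems(3) False] less.prems(1) by blast
      then show ?thesis
        using uniform_attachment_insert_vertex[OF C(3) _ v(2)] by blast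
    qed
  qed
qed

lemma sum_rotate_mod:
  fixes g :: "nat \<Rightarrow> 'a::comm_monoid_add"
  assumes "0 < k"
  shows "(\<Sum>t<k. g ((t + 1) mod k)) = (\<Sum>t<k. g t)"
proof -
  obtain m where k: "k = Suc m"
    using assms by (metis Suc_pred)
  have "(\<Sum>t<Suc m. g ((t + 1) mod Suc m)) = (\<Sum>t<m. g (Suc t)) + g 0"
    by (simp add: sum.lessThan_Suc)
  also have "\<dots> = (\<Sum>t<Suc m. g t)"
    by (subst sum.lessThan_Suc_shift) (simp add: add.commute)
  finally show ?thesis
    using k by simp
qed

lemma even_card_cyclic_changes:
  fixes h :: "nat \<Rightarrow> bool"
  assumes "0 < k"
  shows "even (card {t. t < k \<and> h t \<noteq> h ((t + 1) mod k)})"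
proof -
  let ?next = "\<lambda>t. (t + 1) mod k"
  \<comment> \<open>summing \<open>[a \<noteq> b] + 2[a \<and> b] = [a] + [b]\<close> around the cycle, the right-hand side
    becomes twice one sum\<close>
  have pointwise: "of_bool (h t \<noteq> h (?next t)) + 2 * of_bool (h t \<and> h (?next t))
      = of_bool (h t) + (of_bool (h (?next t)) :: nat)" for t
    by auto
  have "card {t. t < k \<and> h t \<noteq> h (?next t)} + 2 * (\<Sum>t<k. of_bool (h t \<and> h (?next t)))
      = (\<Sum>t<k. of_bool (h t \<noteq> h (?next t)) + 2 * of_bool (h t \<and> h (?next t)) :: nat)"
    by (simp add: sum.distrib sum_distrib_left Collect_conj_eq lessThan_def[symmetric]
        Int_def[symmetric])
  also have "\<dots> = (\<Sum>t<k. of_bool (h t)) + (\<Sum>t<k. of_bool (h (?next t)))"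
    by (simp only: pointwise sum.distrib)
  also have "(\<Sum>t<k. of_bool (h (?next t))) = (\<Sum>t<k. of_bool (h t) :: nat)"
    by (rule sum_rotate_mod[OF assms])
  finally show ?thesis
    by presburger
qed

definition unsigned_arc :: "'v sdigraph \<Rightarrow> 'v \<Rightarrow> 'v \<Rightarrow> bool" where
  "unsigned_arc G j i \<longleftrightarrow> (\<exists>s. (j, s, i) \<in> G)"

definition input_satisfied :: "(('v \<Rightarrow> bool) \<Rightarrow> ('v \<Rightarrow> bool)) \<Rightarrow> ('v \<Rightarrow> bool) \<Rightarrow> 'v \<Rightarrow> 'v \<Rightarrow> bool" where
  "input_satisfied f z j i \<longleftrightarrow>
     ((j, True, i) \<in> global_graph f \<longrightarrow> z j) \<and> ((j, False, i) \<in> global_graph f \<longrightarrow> \<not> z j)"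

lemma and_net_apply:
  "and_net f \<Longrightarrow> f z i \<longleftrightarrow> (\<forall>j. input_satisfied f z j i)"
  unfolding and_net_def input_satisfied_def by blast

lemma and_net_sign_unique:
  "and_net f \<Longrightarrow> (j, s, i) \<in> global_graph f \<Longrightarrow> (j, \<not> s, i) \<notin> global_graph f"
  unfolding and_net_def by (cases s) auto

lemma input_satisfied_cong:
  "z j = z' j \<Longrightarrow> input_satisfied f z j i = input_satisfied f z' j i"
  unfolding input_satisfied_def by simp

lemma input_satisfied_no_arc:
  "\<not> unsigned_arc (global_graph f) j i \<Longrightarrow> input_satisfied f z j i"
  unfolding input_satisfied_def unsigned_arc_def by blast

lemma local_graph_subset_global_graph: "local_graph f z \<subseteq> global_graph f"
  unfolding global_graph_def by blast

lemma and_net_arc_in_local_graph: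
  assumes net: "and_net f" and arc: "(p, s, i) \<in> global_graph f"
    and others: "\<And>j. j \<noteq> p \<Longrightarrow> input_satisfied f z j i"
  shows "(p, s, i) \<in> local_graph f z"
proof -
  have "input_satisfied f (z(p := b)) p i \<longleftrightarrow> b = s" for b
    using arc and_net_sign_unique[OF net arc] unfolding input_satisfied_def by (cases s) auto
  moreover have "input_satisfied f (z(p := b)) j i" if "j \<noteq> p" for b j
    using others[OF that] input_satisfied_cong[of "z(p := b)" j z] that by simp
  ultimately have "f (z(p := b)) i \<longleftrightarrow> b = s" for b
    using and_net_apply[OF net] by metis
  then show ?thesis
    unfolding local_graph_def by (cases s) auto
qed

lemma has_chordless_pos_cycle_local_graph:
  assumes net: "and_net f" and cyc: "induced_cycle (unsigned_arc (global_graph f)) vs"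
    and pos: "even (card {t. t < length vs \<and>
                 (vs ! t, False, vs ! ((t + 1) mod length vs)) \<in> global_graph f})"
    and inputs: "\<And>t j. t < length vs \<Longrightarrow> j \<noteq> vs ! t \<Longrightarrow>
                   input_satisfied f z j (vs ! ((t + 1) mod length vs))"
  shows "has_chordless_pos_cycle (local_graph f z) (length vs)"
proof -
  let ?k = "length vs" and ?G = "global_graph f"
  let ?next = "\<lambda>t. vs ! ((t + 1) mod ?k)"
  define ss where "ss = map (\<lambda>t. (vs ! t, True, ?next t) \<in> ?G) [0..<?k]"
  have len_ss: "length ss = ?k"
    unfolding ss_def by simp
  have arc: "(vs ! t, ss ! t, ?next t) \<in> ?G" if t: "t < ?k" for t
  proof -
    obtain s where "(vs ! t, s, ?next t) \<in> ?G"
      using cyc t unfolding induced_cycle_def unsigned_arc_def by blast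
    then show ?thesis
      using t unfolding ss_def by (cases s; cases "(vs ! t, True, ?next t) \<in> ?G") auto
  qed
  have neg: "\<not> ss ! t \<longleftrightarrow> (vs ! t, False, ?next t) \<in> ?G" if "t < ?k" for t
    using arc[OF that] and_net_sign_unique[OF net, of "vs ! t" True "?next t"] that
    unfolding ss_def by (cases "ss ! t") auto
  have "length (filter Not ss) = card {t. t < ?k \<and> \<not> ss ! t}"
    by (simp add: length_filter_conv_card len_ss)
  also have "\<dots> = card {t. t < ?k \<and> (vs ! t, False, ?next t) \<in> ?G}"
    using neg by (metis (lifting))
  finally have "even (length (filter Not ss))"
    using pos by simp
  moreover have "\<forall>t<?k. (vs ! t, ss ! t, ?next t) \<in> local_graph f z"
    using and_net_arc_in_local_graph[OF net arc inputs] by blast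
  moreover have "\<forall>u\<in>set vs. \<forall>w\<in>set vs. (\<exists>s. (u, s, w) \<in> local_graph f z) \<longrightarrow>
      (\<exists>t<?k. u = vs ! t \<and> w = ?next t)"
    using cyc local_graph_subset_global_graph unfolding induced_cycle_def unsigned_arc_def by blast
  ultimately show ?thesis
    using cyc len_ss unfolding has_chordless_pos_cycle_def induced_cycle_def
    by (intro exI[of _ vs] exI[of _ ss]) (auto simp: Suc_le_eq)
qed

locale fixed_point_pair =
  fixes f :: "('v::finite \<Rightarrow> bool) \<Rightarrow> ('v \<Rightarrow> bool)" and x y :: "'v \<Rightarrow> bool"
  assumes and_net: "and_net f" and fixed: "f x = x" "f y = y"
begin

abbreviation arc :: "'v \<Rightarrow> 'v \<Rightarrow> bool" where
  "arc \<equiv> unsigned_arc (global_graph f)"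

definition disagreement :: "'v set" where
  "disagreement = {i. x i \<noteq> y i}"

definition true_at :: "'v \<Rightarrow> 'v \<Rightarrow> bool" where
  "true_at i = (if x i then x else y)"

lemma true_at_input_satisfied:
  assumes "i \<in> disagreement"
  shows "input_satisfied f (true_at i) j i"
proof -
  have "f (true_at i) i"
    using assms fixed unfolding disagreement_def true_at_def by auto
  then show ?thesis
    using and_net_apply[OF and_net] by blast
qed

lemma in_closed_disagreement: "in_closed arc disagreement"
  unfolding in_closed_def
proof
  fix i
  assume i: "i \<in> disagreement"
  define false_at where "false_at = (if x i then y else x)"
  have "\<not> f false_at i"
    using i fixed unfolding disagreement_def false_at_def by auto
  then obtain j where j: "\<not> input_satisfied f false_at j i"
    using and_net_apply[OF and_net] by blast
  then have "arc j i"
    using input_satisfied_no_arc[of f j i false_at] by blast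
  moreover have "j \<in> disagreement"
  proof (rule ccontr)
    assume "j \<notin> disagreement"
    then have "false_at j = true_at i j"
      unfolding disagreement_def false_at_def true_at_def by auto
    then show False
      using j true_at_input_satisfied[OF i, of j] input_satisfied_cong by metis
  qed
  ultimately show "\<exists>j\<in>disagreement. arc j i"
    by blast
qed

lemma arc_sign_in_disagreement:
  assumes "a \<in> disagreement" "b \<in> disagreement" "(a, s, b) \<in> global_graph f"
  shows "s \<longleftrightarrow> x a = x b"
  using true_at_input_satisfied[OF assms(2), of a] assms
  unfolding input_satisfied_def true_at_def disagreement_def by (cases s; cases "x b") auto

lemma negative_arc_iff_disagree:
  assumes "a \<in> disagreement" "b \<in> disagreement" "arc a b"
  shows "(a, False, b) \<in> global_graph f \<longleftrightarrow> x a \<noteq> x b"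
proof -
  obtain s where s: "(a, s, b) \<in> global_graph f"
    using assms(3) unfolding unsigned_arc_def by blast
  show ?thesis
  proof (cases s)
    case True
    then show ?thesis
      using s arc_sign_in_disagreement[OF assms(1,2) s] and_net_sign_unique[OF and_net s] by simp
  next
    case False
    then show ?thesis
      using s arc_sign_in_disagreement[OF assms(1,2) s] by simp
  qed
qed

lemma induced_cycle_positive:
  assumes cyc: "induced_cycle arc vs" and sub: "set vs \<subseteq> disagreement"
  shows "even (card {t. t < length vs \<and>
           (vs ! t, False, vs ! ((t + 1) mod length vs)) \<in> global_graph f})"
proof -
  let ?k = "length vs"
  let ?next = "\<lambda>t. vs ! ((t + 1) mod ?k)"
  have k: "0 < ?k"
    using cyc unfolding induced_cycle_def by simp
  have "{t. t < ?k \<and> (vs ! t, False, ?next t) \<in> global_graph f}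
      = {t. t < ?k \<and> x (vs ! t) \<noteq> x (?next t)}"
  proof (intro Collect_cong conj_cong refl)
    fix t
    assume t: "t < ?k"
    then have "vs ! t \<in> disagreement" "?next t \<in> disagreement"
      using sub k by auto
    moreover have "arc (vs ! t) (?next t)"
      using cyc t unfolding induced_cycle_def by blast
    ultimately show "(vs ! t, False, ?next t) \<in> global_graph f \<longleftrightarrow> x (vs ! t) \<noteq> x (?next t)"
      by (rule negative_arc_iff_disagree)
  qed
  then show ?thesis
    using even_card_cyclic_changes[OF k, of "\<lambda>t. x (vs ! t)"] by simp
qed

text \<open>Inside the cycle \<open>C\<close> the point is arbitrary; outside, each vertex copies the fixed point
  that is \<open>True\<close> at its out-neighbours in \<open>C\<close>, which is well defined by uniform attachment.\<close>

definition cycle_point :: "'v set \<Rightarrow> 'v set \<Rightarrow> 'v \<Rightarrow> bool" where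
  "cycle_point C P j = (if j \<in> C then j \<in> P else if \<exists>a\<in>C. arc j a \<and> x a then x j else y j)"

lemma cycle_point_input_satisfied:
  assumes C: "finite C" "C \<subseteq> disagreement" "minimal_in_closed arc C"
    and uniform: "uniform_attachment arc x disagreement C"
    and ab: "a \<in> C" "b \<in> C" "arc a b" and "j \<noteq> a"
  shows "input_satisfied f (cycle_point C P) j b"
proof (cases "arc j b")
  case False
  then show ?thesis
    by (rule input_satisfied_no_arc)
next
  case True
  have "j \<notin> C"
    using minimal_in_closed_unique_in_neighbour[OF C(1,3) ab(2) _ ab(1) True ab(3)] \<open>j \<noteq> a\<close>
    by blast
  have "cycle_point C P j = true_at b j"
  proof (cases "x b")
    case True
    then show ?thesis
      using \<open>j \<notin> C\<close> \<open>arc j b\<close> ab(2) unfolding cycle_point_def true_at_def by auto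
  next
    case False
    have "(\<nexists>a. a \<in> C \<and> arc j a \<and> x a) \<or> x j = y j"
    proof (cases "j \<in> disagreement")
      case True
      then have "\<forall>a\<in>C. arc j a \<longrightarrow> x a = x b"
        using uniform \<open>j \<notin> C\<close> \<open>arc j b\<close> ab(2) unfolding uniform_attachment_def by blast
      then show ?thesis
        using \<open>\<not> x b\<close> by blast
    next
      case False
      then show ?thesis
        unfolding disagreement_def by simp
    qed
    then show ?thesis
      using \<open>j \<notin> C\<close> \<open>\<not> x b\<close> unfolding cycle_point_def true_at_def by auto
  qed
  then show ?thesis
    using input_satisfied_cong true_at_input_satisfied ab(2) C(2) by (metis subsetD)
qed

lemma card_cycle_points:
  assumes "finite C"
  shows "card (cycle_point C ` Pow C) = 2 ^ card C"
proof -
  have "inj_on (cycle_point C) (Pow C)"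
  proof (rule inj_onI)
    fix P Q
    assume PQ: "P \<in> Pow C" "Q \<in> Pow C" "cycle_point C P = cycle_point C Q"
    have "j \<in> P \<longleftrightarrow> j \<in> Q" if "j \<in> C" for j
      using fun_cong[OF PQ(3), of j] that unfolding cycle_point_def by simp
    then show "P = Q"
      using PQ(1,2) by blast
  qed
  then show ?thesis
    using card_image card_Pow[OF assms] by metis
qed

lemma ex_many_points_with_positive_cycle:
  assumes "x \<noteq> y"
  obtains k where "1 \<le> k" "k \<le> card (UNIV :: 'v set)"
    "2 ^ k \<le> card {z. has_chordless_pos_cycle (local_graph f z) k}"
proof -
  have "disagreement \<noteq> {}"
    using assms unfolding disagreement_def by auto
  then obtain C where C: "C \<subseteq> disagreement" "minimal_in_closed arc C"
    "uniform_attachment arc x disagreement C"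
    using ex_minimal_in_closed_uniform_attachment[OF finite _ in_closed_disagreement] by blast
  have "finite C"
    by simp
  obtain vs where vs: "set vs = C" "induced_cycle arc vs"
    using minimal_in_closed_induced_cycle[OF \<open>finite C\<close> C(2)] by blast
  define k where "k = length vs"
  have "vs \<noteq> []" "distinct vs"
    using vs(2) unfolding induced_cycle_def by blast+
  then have k: "1 \<le> k" and card_C: "card C = k"
    using distinct_card[of vs] vs(1) unfolding k_def by (auto simp: Suc_le_eq)
  have cycle: "has_chordless_pos_cycle (local_graph f (cycle_point C P)) k" for P
    unfolding k_def
  proof (rule has_chordless_pos_cycle_local_graph[OF and_net vs(2)])
    show "even (card {t. t < length vs \<and>
        (vs ! t, False, vs ! ((t + 1) mod length vs)) \<in> global_graph f})"
      using induced_cycle_positive[OF vs(2)] vs(1) C(1) by simp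
    fix t j
    assume "t < length vs" "j \<noteq> vs ! t"
    moreover have "vs ! t \<in> C" "vs ! ((t + 1) mod length vs) \<in> C"
      "arc (vs ! t) (vs ! ((t + 1) mod length vs))"
      using vs \<open>t < length vs\<close> unfolding induced_cycle_def by auto
    ultimately show "input_satisfied f (cycle_point C P) j (vs ! ((t + 1) mod length vs))"
      using cycle_point_input_satisfied[OF \<open>finite C\<close> C] by blast
  qed
  have "2 ^ k = card (cycle_point C ` Pow C)"
    using card_cycle_points[OF \<open>finite C\<close>] card_C by simp
  also have "\<dots> \<le> card {z. has_chordless_pos_cycle (local_graph f z) k}"
    by (rule card_mono) (use cycle in auto)
  finally show thesis
    using that k card_C card_mono[of UNIV C] by simp
qed

end

theorem corollary11:
  fixes f :: "('v::finite \<Rightarrow> bool) \<Rightarrow> ('v \<Rightarrow> bool)"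
  assumes "and_net f"
    and "\<forall>k. 1 \<le> k \<and> k \<le> card (UNIV :: 'v set) \<longrightarrow>
           card {x. has_chordless_pos_cycle (local_graph f x) k} \<le> 2 ^ k - 1"
  shows "card {x. f x = x} \<le> 1"
proof (rule ccontr)
  assume "\<not> card {x. f x = x} \<le> 1"
  then obtain x y where "f x = x" "f y = y" "x \<noteq> y"
    using card_le_Suc0_iff_eq[of "{x. f x = x}"] by auto
  then interpret fixed_point_pair f x y
    using assms(1) by unfold_locales
  obtain k where "1 \<le> k" "k \<le> card (UNIV :: 'v set)"
    "2 ^ k \<le> card {z. has_chordless_pos_cycle (local_graph f z) k}"
    using ex_many_points_with_positive_cycle[OF \<open>x \<noteq> y\<close>] by blast
  moreover have "(0::nat) < 2 ^ k"
    by simp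
  ultimately show False
    using assms(2) by fastforce
qed

end
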